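(* Let $\Gamma$ be a finite simple graph and $A_\Gamma$ the associated right-angled Artin group with standard generating set $V(\Gamma)$, and let $X = V(\Gamma)\cup V(\Gamma)^{-1}$. If $\phi \in \mathrm{Aut}(A_\Gamma)$ is length-preserving (with respect to word length over $X$), then $\phi$ is a finite composition of inversions and graph automorphisms.
   Context: The right-angled Artin group (RAAG) of a finite simple graph $\Gamma$ is $A_\Gamma = \langle V(\Gamma) \mid [s,t]=1 \text{ for all } \{s,t\}\in E(\Gamma)\rangle$ (generators commute iff they are joined by an edge). For $g \in A_\Gamma$, $|g|$ denotes the length of a shortest word over $X$ representing $g$. An automorphism $\phi$ is length-preserving if $|\phi(g)| = |g|$ for every $g\in A_\Gamma$. An inversion is the automorphism sending one vertex $x\in V(\Gamma)$ to $x^{-1}$ and fixing all other vertices. A graph automorphism is the automorphism of $A_\Gamma$ induced by a graph automorphism of $\Gamma$ (permuting the vertex generators). *)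

theory Defs
  imports "HOL-Algebra.Group"
begin

definition simple_graph :: "'a set \<Rightarrow> ('a \<Rightarrow> 'a \<Rightarrow> bool) \<Rightarrow> bool" where
  "simple_graph V E \<longleftrightarrow> finite V \<and> (\<forall>x y. E x y \<longrightarrow> x \<in> V \<and> y \<in> V)
     \<and> (\<forall>x y. E x y \<longrightarrow> E y x) \<and> (\<forall>x. \<not> E x x)"

text \<open>Letters of X = V \<union> V^{-1}: (v, True) is v, (v, False) is v^{-1}.\<close>
type_synonym 'a letter = "'a \<times> bool"

definition raag_words :: "'a set \<Rightarrow> 'a letter list set" where
  "raag_words V = {w. \<forall>l\<in>set w. fst l \<in> V}"

inductive_set raag_step :: "('a \<Rightarrow> 'a \<Rightarrow> bool) \<Rightarrow> ('a letter list \<times> 'a letter list) set"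
  for E where
  cancel: "(u @ [(x,b),(x,\<not>b)] @ v, u @ v) \<in> raag_step E"
| comm: "E x y \<Longrightarrow> (u @ [(x,b),(y,c)] @ v, u @ [(y,c),(x,b)] @ v) \<in> raag_step E"

definition raag_rel :: "'a set \<Rightarrow> ('a \<Rightarrow> 'a \<Rightarrow> bool) \<Rightarrow> ('a letter list \<times> 'a letter list) set" where
  "raag_rel V E = Restr ((Restr (raag_step E \<union> (raag_step E)\<inverse>) (raag_words V))\<^sup>*) (raag_words V)"

definition RAAG :: "'a set \<Rightarrow> ('a \<Rightarrow> 'a \<Rightarrow> bool) \<Rightarrow> 'a letter list set monoid" where
  "RAAG V E = \<lparr> carrier = raag_words V // raag_rel V E,
               mult = (\<lambda>A B. raag_rel V E `` {a @ b | a b. a \<in> A \<and> b \<in> B}),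
               one = raag_rel V E `` {[]} \<rparr>"

definition raag_len :: "'a letter list set \<Rightarrow> nat" where
  "raag_len g = (LEAST n. \<exists>w\<in>g. length w = n)"

definition length_preserving :: "'a set \<Rightarrow> ('a \<Rightarrow> 'a \<Rightarrow> bool) \<Rightarrow> ('a letter list set \<Rightarrow> 'a letter list set) \<Rightarrow> bool" where
  "length_preserving V E \<phi> \<longleftrightarrow> (\<forall>g\<in>carrier (RAAG V E). raag_len (\<phi> g) = raag_len g)"

definition raag_map :: "'a set \<Rightarrow> ('a \<Rightarrow> 'a \<Rightarrow> bool) \<Rightarrow> ('a letter \<Rightarrow> 'a letter) \<Rightarrow> 'a letter list set \<Rightarrow> 'a letter list set" where
  "raag_map V E f g = raag_rel V E `` (map f ` g)"

definition flip_letter :: "'a \<Rightarrow> 'a letter \<Rightarrow> 'a letter" where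
  "flip_letter x l = (if fst l = x then (fst l, \<not> snd l) else l)"

definition inversion :: "'a set \<Rightarrow> ('a \<Rightarrow> 'a \<Rightarrow> bool) \<Rightarrow> 'a \<Rightarrow> 'a letter list set \<Rightarrow> 'a letter list set" where
  "inversion V E x = raag_map V E (flip_letter x)"

definition graph_aut_of :: "'a set \<Rightarrow> ('a \<Rightarrow> 'a \<Rightarrow> bool) \<Rightarrow> ('a \<Rightarrow> 'a) \<Rightarrow> bool" where
  "graph_aut_of V E \<sigma> \<longleftrightarrow> bij_betw \<sigma> V V \<and> (\<forall>x\<in>V. \<forall>y\<in>V. E x y \<longleftrightarrow> E (\<sigma> x) (\<sigma> y))"

definition induced_graph_aut :: "'a set \<Rightarrow> ('a \<Rightarrow> 'a \<Rightarrow> bool) \<Rightarrow> ('a \<Rightarrow> 'a) \<Rightarrow> 'a letter list set \<Rightarrow> 'a letter list set" where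
  "induced_graph_aut V E \<sigma> = raag_map V E (\<lambda>(v, b). (\<sigma> v, b))"

definition basic_auts :: "'a set \<Rightarrow> ('a \<Rightarrow> 'a \<Rightarrow> bool) \<Rightarrow> ('a letter list set \<Rightarrow> 'a letter list set) set" where
  "basic_auts V E = {inversion V E x | x. x \<in> V} \<union> {induced_graph_aut V E \<sigma> | \<sigma>. graph_aut_of V E \<sigma>}"

end

theory Submission
  imports Defs "HOL-Combinatorics.Perm"
begin

(* An element of length one is a generator or its inverse, so a length-preserving automorphism
   sends each generator v to a letter, and the relation v v^-1 = 1 forces v^-1 to go to the inverse
   letter: the automorphism rewrites words letter by letter as a signed relabelling
   v^e \<mapsto> \<sigma>(v)^(\<plusminus>e).  Exponent sums show that \<sigma> is injective.  For distinct non-adjacent u, w,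
   sending u, w to the transpositions (0 1), (1 2) of S_3 and all other generators to 1 defines a
   homomorphism in which u and w do not commute; hence \<sigma> maps edges to edges.  An injective
   edge-preserving self-map of a finite graph is a graph automorphism, and the signed relabelling
   is that graph automorphism after the inversions of the vertices whose sign is flipped. *)

lemma raag_words_append_iff [simp]:
  "u @ w \<in> raag_words V \<longleftrightarrow> u \<in> raag_words V \<and> w \<in> raag_words V"
  by (auto simp: raag_words_def)

lemma raag_words_Cons_iff [simp]: "l # w \<in> raag_words V \<longleftrightarrow> fst l \<in> V \<and> w \<in> raag_words V"
  by (auto simp: raag_words_def)

lemma Nil_in_raag_words [simp]: "[] \<in> raag_words V"
  by (simp add: raag_words_def)

lemma raag_rel_words: "(u, w) \<in> raag_rel V E \<Longrightarrow> u \<in> raag_words V \<and> w \<in> raag_words V"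
  by (auto simp: raag_rel_def)

lemma raag_step_imp_raag_rel:
  "(u, w) \<in> raag_step E \<Longrightarrow> u \<in> raag_words V \<Longrightarrow> w \<in> raag_words V \<Longrightarrow> (u, w) \<in> raag_rel V E"
  unfolding raag_rel_def by blast

lemma equiv_raag_rel: "equiv (raag_words V) (raag_rel V E)"
proof -
  let ?S = "Restr (raag_step E \<union> (raag_step E)\<inverse>) (raag_words V)"
  have "sym (?S\<^sup>*)"
    by (rule sym_rtrancl) (auto simp: sym_def)
  then show ?thesis
    unfolding equiv_def raag_rel_def refl_on_def sym_def trans_def
    by (blast intro: rtrancl_trans)
qed

lemma raag_rel_refl: "w \<in> raag_words V \<Longrightarrow> (w, w) \<in> raag_rel V E"
  using equiv_raag_rel by (blast dest: equiv_class_self)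

lemma raag_rel_sym: "(u, w) \<in> raag_rel V E \<Longrightarrow> (w, u) \<in> raag_rel V E"
  using equiv_raag_rel by (blast elim: equivE dest: symD)

lemma raag_rel_trans: "(u, v) \<in> raag_rel V E \<Longrightarrow> (v, w) \<in> raag_rel V E \<Longrightarrow> (u, w) \<in> raag_rel V E"
  using equiv_raag_rel by (blast elim: equivE dest: transD)

lemma raag_rel_invariant:
  assumes "\<And>x y. (x, y) \<in> raag_step E \<Longrightarrow> f x = f y" and "(u, w) \<in> raag_rel V E"
  shows "f u = f w"
proof -
  have "(u, w) \<in> (Restr (raag_step E \<union> (raag_step E)\<inverse>) (raag_words V))\<^sup>*"
    using assms(2) by (simp add: raag_rel_def)
  then show ?thesis
    by induction (auto dest: assms(1))
qed

lemma raag_rel_preserved: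
  assumes step: "\<And>x y. (x, y) \<in> raag_step E \<Longrightarrow> x \<in> raag_words V \<Longrightarrow> y \<in> raag_words V
      \<Longrightarrow> (F x, F y) \<in> raag_rel V E"
    and words: "\<And>x. x \<in> raag_words V \<Longrightarrow> F x \<in> raag_words V"
    and "(u, w) \<in> raag_rel V E"
  shows "(F u, F w) \<in> raag_rel V E"
proof -
  have "(u, w) \<in> (Restr (raag_step E \<union> (raag_step E)\<inverse>) (raag_words V))\<^sup>*" "u \<in> raag_words V"
    using assms(3) by (auto simp: raag_rel_def)
  then show ?thesis
  proof (induction rule: rtrancl_induct)
    case base
    then show ?case by (simp add: raag_rel_refl words)
  next
    case (step y z)
    then have "(F y, F z) \<in> raag_rel V E"
      using assms(1) raag_rel_sym by blast
    with step.IH step.prems show ?case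
      by (blast intro: raag_rel_trans)
  qed
qed

lemma raag_step_append: "(x, y) \<in> raag_step E \<Longrightarrow> (p @ x @ q, p @ y @ q) \<in> raag_step E"
proof (induction rule: raag_step.cases)
  case (cancel u a b v)
  then show ?case
    using raag_step.cancel[of "p @ u" a b "v @ q" E] by simp
next
  case (comm a c u b d v)
  then show ?case
    using raag_step.comm[of E a c "p @ u" b d "v @ q"] by simp
qed

lemma raag_rel_append:
  assumes "(u, u') \<in> raag_rel V E" "(w, w') \<in> raag_rel V E"
  shows "(u @ w, u' @ w') \<in> raag_rel V E"
proof -
  have words: "u \<in> raag_words V" "u' \<in> raag_words V" "w \<in> raag_words V" "w' \<in> raag_words V"
    using assms raag_rel_words by blast+
  have "(u @ w, u' @ w) \<in> raag_rel V E"
    by (rule raag_rel_preserved[OF _ _ assms(1)])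
      (use words raag_step_append[of _ _ E "[]" w] in \<open>auto intro: raag_step_imp_raag_rel\<close>)
  moreover have "(u' @ w, u' @ w') \<in> raag_rel V E"
    by (rule raag_rel_preserved[OF _ _ assms(2)])
      (use words raag_step_append[of _ _ E u' "[]"] in \<open>auto intro: raag_step_imp_raag_rel\<close>)
  ultimately show ?thesis
    by (rule raag_rel_trans)
qed

definition raag_elem :: "'a set \<Rightarrow> ('a \<Rightarrow> 'a \<Rightarrow> bool) \<Rightarrow> 'a letter list \<Rightarrow> 'a letter list set"
  where "raag_elem V E w = raag_rel V E `` {w}"

lemma mem_raag_elem_iff: "x \<in> raag_elem V E w \<longleftrightarrow> (w, x) \<in> raag_rel V E"
  by (simp add: raag_elem_def)

lemma raag_elem_eq_iff:
  "u \<in> raag_words V \<Longrightarrow> w \<in> raag_words V \<Longrightarrow> raag_elem V E u = raag_elem V E w \<longleftrightarrow> (u, w) \<in> raag_rel V E"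
  unfolding raag_elem_def by (rule eq_equiv_class_iff[OF equiv_raag_rel])

lemma raag_elem_in_carrier: "w \<in> raag_words V \<Longrightarrow> raag_elem V E w \<in> carrier (RAAG V E)"
  by (simp add: RAAG_def raag_elem_def quotientI)

lemma RAAG_carrierE:
  assumes "g \<in> carrier (RAAG V E)"
  obtains w where "w \<in> raag_words V" "g = raag_elem V E w"
  using assms by (auto simp: RAAG_def raag_elem_def elim!: quotientE)

lemma RAAG_mult_raag_elem:
  assumes "u \<in> raag_words V" "w \<in> raag_words V"
  shows "raag_elem V E u \<otimes>\<^bsub>RAAG V E\<^esub> raag_elem V E w = raag_elem V E (u @ w)"
proof -
  have "raag_rel V E `` {x @ y |x y. x \<in> raag_elem V E u \<and> y \<in> raag_elem V E w}
      = raag_elem V E (u @ w)"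
  proof (intro equalityI subsetI)
    fix z assume "z \<in> raag_rel V E `` {x @ y |x y. x \<in> raag_elem V E u \<and> y \<in> raag_elem V E w}"
    then obtain x y where "(u, x) \<in> raag_rel V E" "(w, y) \<in> raag_rel V E" "(x @ y, z) \<in> raag_rel V E"
      by (auto simp: mem_raag_elem_iff)
    then show "z \<in> raag_elem V E (u @ w)"
      by (auto simp: mem_raag_elem_iff intro: raag_rel_trans raag_rel_append)
  next
    fix z assume "z \<in> raag_elem V E (u @ w)"
    moreover have "u \<in> raag_elem V E u" "w \<in> raag_elem V E w"
      using assms by (simp_all add: mem_raag_elem_iff raag_rel_refl)
    ultimately show "z \<in> raag_rel V E `` {x @ y |x y. x \<in> raag_elem V E u \<and> y \<in> raag_elem V E w}"
      by (auto simp: mem_raag_elem_iff)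
  qed
  then show ?thesis
    by (simp add: RAAG_def)
qed

context monoid_list
begin

lemma F_map_eq_if_raag_rel:
  assumes "(u, w) \<in> raag_rel V E"
    and inverse: "\<And>x b. \<rho> (x, b) \<^bold>* \<rho> (x, \<not> b) = \<^bold>1"
    and commute: "\<And>x y b c. E x y \<Longrightarrow> \<rho> (x, b) \<^bold>* \<rho> (y, c) = \<rho> (y, c) \<^bold>* \<rho> (x, b)"
  shows "F (map \<rho> u) = F (map \<rho> w)"
proof (rule raag_rel_invariant[OF _ assms(1)])
  fix x y assume "(x, y) \<in> raag_step E"
  then show "F (map \<rho> x) = F (map \<rho> y)"
  proof cases
    case (cancel p v b q)
    have "\<rho> (v, b) \<^bold>* (\<rho> (v, \<not> b) \<^bold>* z) = z" for z
      by (simp flip: assoc add: inverse)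
    then show ?thesis
      using cancel by simp
  next
    case (comm v v' p b c q)
    have "\<rho> (v, b) \<^bold>* (\<rho> (v', c) \<^bold>* z) = \<rho> (v', c) \<^bold>* (\<rho> (v, b) \<^bold>* z)" for z
      using commute[OF comm(3)] by (metis assoc)
    then show ?thesis
      using comm by simp
  qed
qed

end

definition exponent_sum :: "'a \<Rightarrow> 'a letter list \<Rightarrow> int"
  where "exponent_sum v w = (\<Sum>l\<leftarrow>w. if fst l = v then if snd l then 1 else - 1 else 0)"

lemma exponent_sum_eq_if_raag_rel:
  "(u, w) \<in> raag_rel V E \<Longrightarrow> exponent_sum v u = exponent_sum v w"
  unfolding exponent_sum_def by (erule sum_list.F_map_eq_if_raag_rel) auto

lemma raag_rel_single_letter: "([l], [l']) \<in> raag_rel V E \<Longrightarrow> l' = l"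
  by (drule exponent_sum_eq_if_raag_rel[where v = "fst l"])
    (auto simp: exponent_sum_def prod_eq_iff split: if_splits)

lemma letter_not_raag_rel_Nil: "([l], []) \<notin> raag_rel V E"
  by (auto simp: exponent_sum_def split: if_splits
      dest: exponent_sum_eq_if_raag_rel[where v = "fst l"])

lemma raag_rel_Nil_inverse_letter: "([l, l'], []) \<in> raag_rel V E \<Longrightarrow> l' = (fst l, \<not> snd l)"
  by (drule exponent_sum_eq_if_raag_rel[where v = "fst l"])
    (auto simp: exponent_sum_def prod_eq_iff split: if_splits)

definition transposition_rep :: "'a \<Rightarrow> 'a \<Rightarrow> 'a letter \<Rightarrow> nat perm"
  where "transposition_rep u w l =
    (if fst l = u then Perm.swap 0 1 else if fst l = w then Perm.swap 1 2 else 1)"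

lemma nonadjacent_not_commute:
  assumes "u \<noteq> w" "\<not> E u w" "\<not> E w u"
  shows "([(u, b), (w, c)], [(w, c), (u, b)]) \<notin> raag_rel V E"
proof
  assume "([(u, b), (w, c)], [(w, c), (u, b)]) \<in> raag_rel V E"
  then have "prod_list (map (transposition_rep u w) [(u, b), (w, c)])
      = prod_list (map (transposition_rep u w) [(w, c), (u, b)])"
    by (rule prod_list.F_map_eq_if_raag_rel) (use assms in \<open>auto simp: transposition_rep_def\<close>)
  then have "Perm.swap 0 1 * Perm.swap 1 2 = (Perm.swap 1 2 * Perm.swap 0 1 :: nat perm)"
    using assms(1) by (simp add: transposition_rep_def)
  then show False
    by (auto simp: perm_eq_iff apply_times dest: spec[of _ 0])
qed

lemma raag_len_le: "w \<in> g \<Longrightarrow> raag_len g \<le> length w"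
  unfolding raag_len_def by (auto intro: Least_le)

lemma raag_len_attained:
  assumes "g \<in> carrier (RAAG V E)"
  obtains w where "w \<in> raag_words V" "g = raag_elem V E w" "length w = raag_len g"
proof -
  obtain u where u: "u \<in> raag_words V" "g = raag_elem V E u"
    using assms by (rule RAAG_carrierE)
  then have "u \<in> g"
    by (simp add: mem_raag_elem_iff raag_rel_refl)
  have "\<exists>w\<in>g. length w = raag_len g"
    unfolding raag_len_def by (rule LeastI_ex) (use \<open>u \<in> g\<close> in auto)
  then obtain w where "w \<in> g" "length w = raag_len g"
    by blast
  moreover from this u have "w \<in> raag_words V" "g = raag_elem V E w"
    using raag_rel_words raag_elem_eq_iff by (fastforce simp: mem_raag_elem_iff)+
  ultimately show ?thesis
    using that by blast
qed

lemma raag_len_Nil: "raag_len (raag_elem V E []) = 0"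
  using raag_len_le[of "[]" "raag_elem V E []"] by (simp add: mem_raag_elem_iff raag_rel_refl)

lemma raag_len_letter:
  assumes "fst l \<in> V"
  shows "raag_len (raag_elem V E [l]) = 1"
proof -
  have "raag_len (raag_elem V E [l]) \<le> 1"
    using raag_len_le[of "[l]"] assms by (simp add: mem_raag_elem_iff raag_rel_refl)
  moreover have "raag_len (raag_elem V E [l]) \<noteq> 0"
  proof
    assume "raag_len (raag_elem V E [l]) = 0"
    then obtain w where "w \<in> raag_words V" "raag_elem V E [l] = raag_elem V E w" "w = []"
      using raag_len_attained raag_elem_in_carrier assms
      by (metis length_0_conv raag_words_Cons_iff Nil_in_raag_words)
    then have "([l], []) \<in> raag_rel V E"
      using assms by (simp add: raag_elem_eq_iff)
    then show False
      using letter_not_raag_rel_Nil by blast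
  qed
  ultimately show ?thesis
    by simp
qed

definition signed_relabel :: "('a \<Rightarrow> 'a) \<Rightarrow> ('a \<Rightarrow> bool) \<Rightarrow> 'a letter \<Rightarrow> 'a letter"
  where "signed_relabel \<sigma> \<tau> l = (\<sigma> (fst l), snd l = \<tau> (fst l))"

lemma hom_raag_elem_map:
  assumes \<phi>: "\<phi> \<in> hom (RAAG V E) (RAAG V E)"
    and one: "\<phi> (raag_elem V E []) = raag_elem V E []"
    and letter: "\<And>l. fst l \<in> V \<Longrightarrow> fst (h l) \<in> V \<and> \<phi> (raag_elem V E [l]) = raag_elem V E [h l]"
    and "w \<in> raag_words V"
  shows "\<phi> (raag_elem V E w) = raag_elem V E (map h w)"
  using assms(4)
proof (induction w)
  case Nil
  then show ?case using one by simp
next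
  case (Cons l w)
  have words: "[l] \<in> raag_words V" "w \<in> raag_words V" "[h l] \<in> raag_words V"
    "map h w \<in> raag_words V"
    using Cons.prems letter by (auto simp: raag_words_def)
  have "\<phi> (raag_elem V E ([l] @ w)) = \<phi> (raag_elem V E [l]) \<otimes>\<^bsub>RAAG V E\<^esub> \<phi> (raag_elem V E w)"
    using \<phi> words by (simp only: RAAG_mult_raag_elem[symmetric] hom_mult raag_elem_in_carrier)
  also have "\<dots> = raag_elem V E ([h l] @ map h w)"
    using Cons words letter by (simp add: RAAG_mult_raag_elem)
  finally show ?case
    by simp
qed

lemma length_preserving_hom_generators:
  assumes \<phi>: "\<phi> \<in> hom (RAAG V E) (RAAG V E)" and "length_preserving V E \<phi>"
  obtains h where "\<phi> (raag_elem V E []) = raag_elem V E []"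
    "\<And>l. fst l \<in> V \<Longrightarrow> fst (h l) \<in> V \<and> \<phi> (raag_elem V E [l]) = raag_elem V E [h l]"
proof -
  have len: "raag_len (\<phi> (raag_elem V E w)) = raag_len (raag_elem V E w)" if "w \<in> raag_words V" for w
    using assms(2) that by (simp add: length_preserving_def raag_elem_in_carrier)
  have closed: "\<phi> (raag_elem V E w) \<in> carrier (RAAG V E)" if "w \<in> raag_words V" for w
    using \<phi> that by (simp add: hom_in_carrier raag_elem_in_carrier)
  have "\<phi> (raag_elem V E []) = raag_elem V E []"
    using raag_len_attained[OF closed] len raag_len_Nil by (metis Nil_in_raag_words length_0_conv)
  moreover have "\<exists>l'. fst l' \<in> V \<and> \<phi> (raag_elem V E [l]) = raag_elem V E [l']" if "fst l \<in> V" for l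
  proof -
    from that have "[l] \<in> raag_words V"
      by simp
    then obtain w where w: "w \<in> raag_words V" "\<phi> (raag_elem V E [l]) = raag_elem V E w"
      and length: "length w = raag_len (\<phi> (raag_elem V E [l]))"
      by (rule raag_len_attained[OF closed])
    have "length w = 1"
      using length len[of "[l]"] raag_len_letter[OF that] that by simp
    then obtain l' where "w = [l']"
      by (auto simp: length_Suc_conv)
    with w show ?thesis
      by (intro exI[of _ l']) simp
  qed
  ultimately show ?thesis
    using that by metis
qed

lemma length_preserving_hom_signed_relabel:
  assumes \<phi>: "\<phi> \<in> hom (RAAG V E) (RAAG V E)" and "length_preserving V E \<phi>"
  obtains \<sigma> \<tau> where "\<sigma> ` V \<subseteq> V"
    "\<And>w. w \<in> raag_words V \<Longrightarrow> \<phi> (raag_elem V E w) = raag_elem V E (map (signed_relabel \<sigma> \<tau>) w)"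
proof -
  obtain h where one: "\<phi> (raag_elem V E []) = raag_elem V E []" and letter:
    "\<And>l. fst l \<in> V \<Longrightarrow> fst (h l) \<in> V \<and> \<phi> (raag_elem V E [l]) = raag_elem V E [h l]"
    using length_preserving_hom_generators[OF assms] by blast
  note map = hom_raag_elem_map[OF \<phi> one letter]
  have inverse: "h (v, False) = (fst (h (v, True)), \<not> snd (h (v, True)))" if "v \<in> V" for v
  proof -
    have "raag_elem V E [(v, True), (v, False)] = raag_elem V E []"
      using raag_step.cancel[of "[]" v True "[]" E] that
      by (simp add: raag_elem_eq_iff raag_step_imp_raag_rel)
    then have "raag_elem V E [h (v, True), h (v, False)] = raag_elem V E []"
      using map[of "[(v, True), (v, False)]"] one that by simp
    moreover have "[h (v, True), h (v, False)] \<in> raag_words V"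
      using letter that by simp
    ultimately have "([h (v, True), h (v, False)], []) \<in> raag_rel V E"
      by (simp add: raag_elem_eq_iff)
    then show ?thesis
      by (rule raag_rel_Nil_inverse_letter)
  qed
  define \<sigma> where "\<sigma> v = fst (h (v, True))" for v
  define \<tau> where "\<tau> v = snd (h (v, True))" for v
  have relabel: "h l = signed_relabel \<sigma> \<tau> l" if "fst l \<in> V" for l
  proof (cases l)
    case (Pair v b)
    with inverse[of v] that show ?thesis
      by (cases b) (auto simp: signed_relabel_def \<sigma>_def \<tau>_def)
  qed
  show ?thesis
  proof
    show "\<sigma> ` V \<subseteq> V"
      using letter by (auto simp: \<sigma>_def)
    fix w assume "w \<in> raag_words V"
    moreover from this have "map h w = map (signed_relabel \<sigma> \<tau>) w"
      using relabel by (auto simp: raag_words_def)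
    ultimately show "\<phi> (raag_elem V E w) = raag_elem V E (map (signed_relabel \<sigma> \<tau>) w)"
      by (simp only: map)
  qed
qed

lemma signed_relabel_inj_on:
  assumes "inj_on \<phi> (carrier (RAAG V E))" "\<sigma> ` V \<subseteq> V"
    and \<phi>: "\<And>w. w \<in> raag_words V \<Longrightarrow> \<phi> (raag_elem V E w) = raag_elem V E (map (signed_relabel \<sigma> \<tau>) w)"
  shows "inj_on \<sigma> V"
proof
  fix v v' assume v: "v \<in> V" "v' \<in> V" "\<sigma> v = \<sigma> v'"
  define b where "b = (\<tau> v' = \<tau> v)"
  have "signed_relabel \<sigma> \<tau> (v', True) = signed_relabel \<sigma> \<tau> (v, b)"
    using v by (auto simp: signed_relabel_def b_def)
  then have "\<phi> (raag_elem V E [(v', True)]) = \<phi> (raag_elem V E [(v, b)])"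
    using v by (simp add: \<phi>)
  then have "raag_elem V E [(v', True)] = raag_elem V E [(v, b)]"
    by (rule inj_onD[OF assms(1)]) (use v in \<open>auto intro: raag_elem_in_carrier\<close>)
  then have "([(v', True)], [(v, b)]) \<in> raag_rel V E"
    using v by (simp add: raag_elem_eq_iff)
  then show "v = v'"
    by (auto dest: raag_rel_single_letter)
qed

lemma signed_relabel_preserves_edges:
  assumes "simple_graph V E" "inj_on \<sigma> V"
    and \<phi>: "\<And>w. w \<in> raag_words V \<Longrightarrow> \<phi> (raag_elem V E w) = raag_elem V E (map (signed_relabel \<sigma> \<tau>) w)"
    and "\<sigma> ` V \<subseteq> V" "E x y"
  shows "E (\<sigma> x) (\<sigma> y)"
proof (rule ccontr)
  assume nonadjacent: "\<not> E (\<sigma> x) (\<sigma> y)"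
  have xy: "x \<in> V" "y \<in> V" "x \<noteq> y"
    using assms(1,5) by (auto simp: simple_graph_def)
  let ?xy = "[(\<sigma> x, \<tau> x), (\<sigma> y, \<tau> y)]" and ?yx = "[(\<sigma> y, \<tau> y), (\<sigma> x, \<tau> x)]"
  have "raag_elem V E [(x, True), (y, True)] = raag_elem V E [(y, True), (x, True)]"
    using raag_step.comm[of E x y "[]" True True "[]"] assms(5) xy
    by (simp add: raag_elem_eq_iff raag_step_imp_raag_rel)
  then have "raag_elem V E ?xy = raag_elem V E ?yx"
    using \<phi>[of "[(x, True), (y, True)]"] \<phi>[of "[(y, True), (x, True)]"] xy
    by (simp add: signed_relabel_def)
  moreover have "?xy \<in> raag_words V" "?yx \<in> raag_words V"
    using xy assms(4) by auto
  ultimately have "(?xy, ?yx) \<in> raag_rel V E"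
    by (simp add: raag_elem_eq_iff)
  moreover have "\<sigma> x \<noteq> \<sigma> y"
    using xy assms(2) by (auto dest: inj_onD)
  moreover have "\<not> E (\<sigma> y) (\<sigma> x)"
    using nonadjacent assms(1) by (auto simp: simple_graph_def)
  ultimately show False
    using nonadjacent_not_commute[of "\<sigma> x" "\<sigma> y" E] nonadjacent by blast
qed

lemma graph_aut_of_if_inj_on_edge_preserving:
  assumes graph: "simple_graph V E" and "inj_on \<sigma> V" "\<sigma> ` V \<subseteq> V"
    and edge: "\<And>x y. E x y \<Longrightarrow> E (\<sigma> x) (\<sigma> y)"
  shows "graph_aut_of V E \<sigma>"
proof -
  have "finite V" and edge_in_V: "\<And>x y. E x y \<Longrightarrow> x \<in> V \<and> y \<in> V"
    using graph by (auto simp: simple_graph_def)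
  have "\<sigma> ` V = V"
    using endo_inj_surj[OF \<open>finite V\<close>] assms(2,3) by blast
  let ?edges = "{(x, y). E x y}" and ?\<sigma>\<^sub>2 = "map_prod \<sigma> \<sigma>"
  have "finite ?edges"
    by (rule finite_subset[of _ "V \<times> V"]) (use \<open>finite V\<close> edge_in_V in auto)
  moreover have "?\<sigma>\<^sub>2 ` ?edges \<subseteq> ?edges"
    using edge by auto
  moreover have "inj_on ?\<sigma>\<^sub>2 ?edges"
    using assms(2) edge_in_V by (auto simp: inj_on_def)
  ultimately have edges_onto: "?\<sigma>\<^sub>2 ` ?edges = ?edges"
    by (rule endo_inj_surj)
  have "E x y" if "x \<in> V" "y \<in> V" "E (\<sigma> x) (\<sigma> y)" for x y
  proof -
    have "(\<sigma> x, \<sigma> y) \<in> ?\<sigma>\<^sub>2 ` ?edges"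
      using that(3) edges_onto by simp
    then obtain x' y' where "E x' y'" "\<sigma> x' = \<sigma> x" "\<sigma> y' = \<sigma> y"
      by auto
    moreover from this have "x' = x" "y' = y"
      using that assms(2) edge_in_V by (auto dest: inj_onD)
    ultimately show ?thesis
      by simp
  qed
  then show ?thesis
    using assms(2) \<open>\<sigma> ` V = V\<close> edge by (auto simp: graph_aut_of_def bij_betw_def)
qed

lemma raag_step_map:
  assumes inverse: "\<And>x b. f (x, \<not> b) = (fst (f (x, b)), \<not> snd (f (x, b)))"
    and adjacent: "\<And>x y b c. E x y \<Longrightarrow> E (fst (f (x, b))) (fst (f (y, c)))"
    and "(u, w) \<in> raag_step E"
  shows "(map f u, map f w) \<in> raag_step E"
  using assms(3)
proof cases
  case (cancel p x b q)
  obtain x' b' where "f (x, b) = (x', b')"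
    by fastforce
  then show ?thesis
    using cancel inverse[of x b] raag_step.cancel[of "map f p" x' b' "map f q" E] by simp
next
  case (comm x y p b c q)
  obtain x' b' y' c' where "f (x, b) = (x', b')" "f (y, c) = (y', c')"
    by fastforce
  then show ?thesis
    using comm adjacent[of x y b c] raag_step.comm[of E x' y' "map f p" b' c' "map f q"] by simp
qed

lemma raag_map_raag_elem:
  assumes "\<And>l. fst l \<in> V \<Longrightarrow> fst (f l) \<in> V"
    and "\<And>x b. f (x, \<not> b) = (fst (f (x, b)), \<not> snd (f (x, b)))"
    and "\<And>x y b c. E x y \<Longrightarrow> E (fst (f (x, b))) (fst (f (y, c)))"
    and w: "w \<in> raag_words V"
  shows "raag_map V E f (raag_elem V E w) = raag_elem V E (map f w)"
proof -
  have words: "map f x \<in> raag_words V" if "x \<in> raag_words V" for x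
    using that assms(1) by (auto simp: raag_words_def)
  have rel: "(map f x, map f y) \<in> raag_rel V E" if "(x, y) \<in> raag_rel V E" for x y
    by (rule raag_rel_preserved[OF _ _ that])
      (auto intro: raag_step_imp_raag_rel raag_step_map[where f = f and E = E, OF assms(2,3)] words)
  show ?thesis
    unfolding raag_map_def raag_elem_def
  proof (intro equalityI subsetI)
    fix z assume "z \<in> raag_rel V E `` (map f ` raag_rel V E `` {w})"
    then obtain w' where "(w, w') \<in> raag_rel V E" "(map f w', z) \<in> raag_rel V E"
      by auto
    then show "z \<in> raag_rel V E `` {map f w}"
      using rel raag_rel_trans by blast
  next
    fix z assume "z \<in> raag_rel V E `` {map f w}"
    moreover have "w \<in> raag_rel V E `` {w}"
      using w raag_rel_refl by auto
    ultimately show "z \<in> raag_rel V E `` (map f ` raag_rel V E `` {w})"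
      by blast
  qed
qed

lemma inversions_raag_elem:
  assumes "distinct xs" "w \<in> raag_words V"
  shows "foldr (\<circ>) (map (inversion V E) xs) id (raag_elem V E w)
    = raag_elem V E (map (\<lambda>(v, b). (v, b \<noteq> (v \<in> set xs))) w)"
  using assms(1)
proof (induction xs)
  case Nil
  then show ?case by simp
next
  case (Cons a xs)
  let ?flip = "\<lambda>(v, b). (v, b \<noteq> (v \<in> set xs))"
  have words: "map ?flip w \<in> raag_words V"
    using assms(2) by (auto simp: raag_words_def)
  have "inversion V E a (raag_elem V E (map ?flip w))
      = raag_elem V E (map (flip_letter a) (map ?flip w))"
    unfolding inversion_def by (rule raag_map_raag_elem[OF _ _ _ words]) (auto simp: flip_letter_def)
  moreover have "flip_letter a \<circ> ?flip = (\<lambda>(v, b). (v, b \<noteq> (v \<in> set (a # xs))))"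
    using Cons.prems by (auto simp: flip_letter_def fun_eq_iff)
  ultimately show ?case
    using Cons by simp
qed

lemma signed_relabel_basic_auts:
  assumes graph: "simple_graph V E" and \<sigma>: "graph_aut_of V E \<sigma>"
  obtains fs where "set fs \<subseteq> basic_auts V E"
    "\<And>w. w \<in> raag_words V \<Longrightarrow> foldr (\<circ>) fs id (raag_elem V E w) = raag_elem V E (map (signed_relabel \<sigma> \<tau>) w)"
proof -
  obtain xs where xs: "set xs = {v \<in> V. \<not> \<tau> v}" "distinct xs"
    using finite_distinct_list[of "{v \<in> V. \<not> \<tau> v}"] graph by (auto simp: simple_graph_def)
  have \<sigma>V: "\<sigma> v \<in> V" if "v \<in> V" for v
    using \<sigma> that by (auto simp: graph_aut_of_def bij_betw_def)
  have \<sigma>E: "E (\<sigma> x) (\<sigma> y)" if "E x y" for x y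
    using graph \<sigma> that unfolding simple_graph_def graph_aut_of_def by blast
  let ?fs = "induced_graph_aut V E \<sigma> # map (inversion V E) xs"
  have "set ?fs \<subseteq> basic_auts V E"
    using \<sigma> xs(1) by (auto simp: basic_auts_def)
  moreover have "foldr (\<circ>) ?fs id (raag_elem V E w) = raag_elem V E (map (signed_relabel \<sigma> \<tau>) w)"
    if "w \<in> raag_words V" for w
  proof -
    let ?flip = "\<lambda>(v, b). (v, b \<noteq> (v \<in> set xs))"
    have "map ?flip w \<in> raag_words V"
      using that by (auto simp: raag_words_def)
    have "foldr (\<circ>) ?fs id (raag_elem V E w) = induced_graph_aut V E \<sigma> (raag_elem V E (map ?flip w))"
      using inversions_raag_elem[OF xs(2) that] by simp
    also have "\<dots> = raag_elem V E (map (\<lambda>(v, b). (\<sigma> v, b)) (map ?flip w))"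
      unfolding induced_graph_aut_def
      by (rule raag_map_raag_elem[OF _ _ _ \<open>map ?flip w \<in> raag_words V\<close>])
        (use \<sigma>V \<sigma>E in auto)
    also have "map (\<lambda>(v, b). (\<sigma> v, b)) (map ?flip w) = map (signed_relabel \<sigma> \<tau>) w"
      using that xs(1) by (auto simp: raag_words_def signed_relabel_def)
    finally show ?thesis .
  qed
  ultimately show ?thesis
    using that by blast
qed

theorem lemma2p3:
  fixes V :: "'a set" and E :: "'a \<Rightarrow> 'a \<Rightarrow> bool"
    and \<phi> :: "'a letter list set \<Rightarrow> 'a letter list set"
  assumes "simple_graph V E"
    and "\<phi> \<in> iso (RAAG V E) (RAAG V E)"
    and "length_preserving V E \<phi>"
  shows "\<exists>fs. set fs \<subseteq> basic_auts V E \<and>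
           (\<forall>g\<in>carrier (RAAG V E). \<phi> g = foldr (\<circ>) fs id g)"
proof -
  have hom: "\<phi> \<in> hom (RAAG V E) (RAAG V E)" and inj: "inj_on \<phi> (carrier (RAAG V E))"
    using assms(2) by (auto simp: iso_def bij_betw_def)
  obtain \<sigma> \<tau> where \<sigma>V: "\<sigma> ` V \<subseteq> V" and \<phi>_eq:
    "\<And>w. w \<in> raag_words V \<Longrightarrow> \<phi> (raag_elem V E w) = raag_elem V E (map (signed_relabel \<sigma> \<tau>) w)"
    using length_preserving_hom_signed_relabel[OF hom assms(3)] by blast
  have "inj_on \<sigma> V"
    using inj \<sigma>V \<phi>_eq by (rule signed_relabel_inj_on)
  moreover have "E (\<sigma> x) (\<sigma> y)" if "E x y" for x y
    using assms(1) \<open>inj_on \<sigma> V\<close> \<phi>_eq \<sigma>V that by (rule signed_relabel_preserves_edges)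
  ultimately have "graph_aut_of V E \<sigma>"
    using assms(1) \<sigma>V by (intro graph_aut_of_if_inj_on_edge_preserving)
  then obtain fs where fs: "set fs \<subseteq> basic_auts V E"
    "\<And>w. w \<in> raag_words V \<Longrightarrow> foldr (\<circ>) fs id (raag_elem V E w) = raag_elem V E (map (signed_relabel \<sigma> \<tau>) w)"
    using signed_relabel_basic_auts[OF assms(1)] by blast
  show ?thesis
  proof (intro exI conjI ballI)
    show "set fs \<subseteq> basic_auts V E"
      by (fact fs(1))
    fix g assume "g \<in> carrier (RAAG V E)"
    then obtain w where "w \<in> raag_words V" "g = raag_elem V E w"
      by (rule RAAG_carrierE)
    then show "\<phi> g = foldr (\<circ>) fs id g"
      by (simp add: \<phi>_eq fs(2))
  qed
qed

end
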